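(* Let $L\ge 1$ and $0\le l<m\le L$. For all $\mathbf{i},\mathbf{a}\in B_l$, $\mathbf{j}\in B_m$ and $\mathbf{b}\in B_{m-l}$ one has \[ M(q,t)^{\mathbf{a},\mathbf{b}}_{\mathbf{i},\mathbf{j}} \;=\; S(q,t)^{\mathbf{a},\mathbf{b}}_{\mathbf{i},\mathbf{j}}, \] as formal power series in $q$ with coefficients in $\mathbb{Q}(t)$ (the left side being a rational function of $q,t$, expanded in $q$).
   Context: Notation: $B_l=\{\mathbf{i}=(i_1,\dots,i_L)\in\{0,1\}^L : i_1+\dots+i_L=l\}$; for $\mathbf{x},\mathbf{y}\in\{0,1\}^L$, $\mathbf{x}\le\mathbf{y}$ means $\mathbf{y}-\mathbf{x}\in\mathbb{Z}_{\ge0}^L$; columns are indexed by $\mathbb{Z}_L=\{1,\dots,L\}$ cyclically; $\theta(\text{true})=1,\theta(\text{false})=0$. Two-row pairing weights $M$. Picture $\mathbf{j}\in B_m$ as an upper row of $L$ boxes with a ball in column $k$ iff $j_k=1$, and $\mathbf{i}\in B_l$ as a lower row with a ball in column $k$ iff $i_k=1$. A pairing $\phi$ is an injection from the lower balls to the upper balls built as follows: the lower balls are processed from left to right (increasing column); when processing a lower ball in column $c$, the upper balls not yet chosen are called free; if the upper box in column $c$ holds a free ball, it must be chosen (trivial pairing, weight $1$); otherwise any free upper ball, say in column $c'\neq c$, may be chosen, with weight \[ \frac{(1-t)\,t^{s}\,q^{w}}{1-q\,t^{f}}, \] where $f$ is the number of free upper balls just before this choice, $s$ is the number of free upper balls in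 the columns $c'+1,c'+2,\dots,c-1$ (indices mod $L$, i.e. strictly between going cyclically leftwards from $c$ to $c'$), and $w=1$ if $c<c'$ (wrapping) and $w=0$ if $c'<c$. The weight of $\phi$ is the product of the weights of its $l$ choices. Define \[ M(q,t)^{\mathbf{a},\mathbf{b}}_{\mathbf{i},\mathbf{j}}=\theta(\mathbf{a}+\mathbf{b}=\mathbf{j})\sum_{\phi}\mathrm{wt}(\phi), \] the sum over pairings $\phi$ whose set of chosen upper balls is exactly the set of positions of $1$'s in $\mathbf{a}$. $t$-oscillators: $F=\bigoplus_{d\ge0}\mathbb{Q}(t)|d\rangle$ with $\mathbf{a}^+|d\rangle=|d+1\rangle$, $\mathbf{a}^-|d\rangle=(1-t^d)|d-1\rangle$ ($|-1\rangle=0$), $\mathbf{k}|d\rangle=t^d|d\rangle$, $q^{\mathbf{h}}|d\rangle=q^d|d\rangle$. Five-vertex weights $S^{ab}_{ij}$ ($i$ = left, $a$ = right, $j$ = bottom, $b$ = top edge, all in $\{0,1\}$), valued in operators on $F$: $S^{00}_{00}=1$, $S^{10}_{11}=1$, $S^{01}_{01}=\mathbf{k}$, $S^{10}_{01}=\mathbf{a}^-$, $S^{00}_{10}=\mathbf{a}^+$, and $S^{ab}_{ij}=0$ otherwise. Define \[ S(q,t)^{\mathbf{a},\mathbf{b}}_{\mathbf{i},\mathbf{j}}=(1-q\,t^{m-l})\,\mathrm{tr}_F\bigl(q^{\mathbf{h}}S^{a_1b_1}_{i_1j_1}S^{a_2b_2}_{i_2j_2}\cdots S^{a_Lb_L}_{i_Lj_L}\bigr),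 \] where $\mathrm{tr}_F(A)=\sum_{d\ge0}\langle d|A|d\rangle$ is taken as a formal power series in $q$. *)

theory Defs
  imports "HOL-Computational_Algebra.Polynomial"
          "HOL-Computational_Algebra.Fraction_Field"
          "HOL-Computational_Algebra.Formal_Power_Series"
begin

(* Coefficient field Q(t) = field of fractions of Q[t]; q is the fps variable fps_X. *)
type_synonym K = "rat poly fract"

definition tt :: K where "tt = Fract [:0, 1:] 1"

(* Vectors in {0,1}^L are nat lists of length L; columns are 0..L-1 (0-based). *)
definition Bset :: "nat \<Rightarrow> nat \<Rightarrow> nat list set" where
  "Bset L l = {x. length x = L \<and> set x \<subseteq> {0, 1} \<and> sum_list x = l}"

definition balls :: "nat \<Rightarrow> nat list \<Rightarrow> nat set" where
  "balls L x = {k. k < L \<and> x ! k = 1}"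

definition lower_list :: "nat \<Rightarrow> nat list \<Rightarrow> nat list" where
  "lower_list L x = filter (\<lambda>k. x ! k = 1) [0..<L]"

definition between :: "nat \<Rightarrow> nat \<Rightarrow> nat \<Rightarrow> nat set" where
  "between L c' c = (if c' < c then {c'<..<c} else {c'<..<L} \<union> {..<c})"

(* weight of choosing upper ball c' for lower ball c, free upper balls F *)
definition choice_wt :: "nat \<Rightarrow> nat \<Rightarrow> nat \<Rightarrow> nat set \<Rightarrow> K fps" where
  "choice_wt L c c' F =
     (if c' = c then 1
      else fps_const ((1 - tt) * tt ^ card (F \<inter> between L c' c))
           * fps_X ^ (if c < c' then 1 else 0)
           * inverse (1 - fps_const (tt ^ card F) * fps_X))"

(* a pairing is the list cs of chosen upper columns, cs!k chosen for the k-th lower ball *)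
definition valid_pairing :: "nat \<Rightarrow> nat list \<Rightarrow> nat list \<Rightarrow> nat list \<Rightarrow> bool" where
  "valid_pairing L i j cs \<longleftrightarrow>
     length cs = length (lower_list L i) \<and>
     (\<forall>k < length cs.
        (let F = balls L j - set (take k cs); c = lower_list L i ! k in
           cs ! k \<in> F \<and> (c \<in> F \<longrightarrow> cs ! k = c)))"

definition pairing_wt :: "nat \<Rightarrow> nat list \<Rightarrow> nat list \<Rightarrow> nat list \<Rightarrow> K fps" where
  "pairing_wt L i j cs =
     (\<Prod>k < length cs. choice_wt L (lower_list L i ! k) (cs ! k) (balls L j - set (take k cs)))"

definition Mw :: "nat \<Rightarrow> nat list \<Rightarrow> nat list \<Rightarrow> nat list \<Rightarrow> nat list \<Rightarrow> K fps" where
  "Mw L a b i j =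
     (if (\<forall>k < L. a ! k + b ! k = j ! k)
      then (\<Sum>cs \<in> {cs. valid_pairing L i j cs \<and> set cs = balls L a}. pairing_wt L i j cs)
      else 0)"

(* t-oscillator operators acting on coefficient vectors v (v d = coefficient of |d>) *)
definition aplus :: "(nat \<Rightarrow> K) \<Rightarrow> (nat \<Rightarrow> K)" where
  "aplus v = (\<lambda>d. if d = 0 then 0 else v (d - 1))"

definition aminus :: "(nat \<Rightarrow> K) \<Rightarrow> (nat \<Rightarrow> K)" where
  "aminus v = (\<lambda>d. (1 - tt ^ (d + 1)) * v (d + 1))"

definition kop :: "(nat \<Rightarrow> K) \<Rightarrow> (nat \<Rightarrow> K)" where
  "kop v = (\<lambda>d. tt ^ d * v d)"

(* five-vertex weight S^{ab}_{ij}: i left, a right, j bottom, b top *)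
definition Sv :: "nat \<Rightarrow> nat \<Rightarrow> nat \<Rightarrow> nat \<Rightarrow> (nat \<Rightarrow> K) \<Rightarrow> (nat \<Rightarrow> K)" where
  "Sv a b i j =
     (if (a, b, i, j) = (0, 0, 0, 0) then id
      else if (a, b, i, j) = (1, 0, 1, 1) then id
      else if (a, b, i, j) = (0, 1, 0, 1) then kop
      else if (a, b, i, j) = (1, 0, 0, 1) then aminus
      else if (a, b, i, j) = (0, 0, 1, 0) then aplus
      else (\<lambda>v. (\<lambda>_. 0)))"

definition basis :: "nat \<Rightarrow> nat \<Rightarrow> K" where
  "basis d = (\<lambda>e. if e = d then 1 else 0)"

definition Sprod :: "nat \<Rightarrow> nat list \<Rightarrow> nat list \<Rightarrow> nat list \<Rightarrow> nat list \<Rightarrow> (nat \<Rightarrow> K) \<Rightarrow> (nat \<Rightarrow> K)" where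
  "Sprod L a b i j = foldr (\<circ>) (map (\<lambda>k. Sv (a ! k) (b ! k) (i ! k) (j ! k)) [0..<L]) id"

(* tr_F(q^h A) as fps in q: coefficient of q^d is <d|A|d> *)
definition trace_qh :: "((nat \<Rightarrow> K) \<Rightarrow> (nat \<Rightarrow> K)) \<Rightarrow> K fps" where
  "trace_qh A = Abs_fps (\<lambda>d. A (basis d) d)"

definition Sw :: "nat \<Rightarrow> nat list \<Rightarrow> nat list \<Rightarrow> nat list \<Rightarrow> nat list \<Rightarrow> K fps" where
  "Sw L a b i j =
     (1 - fps_const (tt ^ (sum_list j - sum_list i)) * fps_X) * trace_qh (Sprod L a b i j)"

end

theory Submission
  imports Defs
begin

text \<open>
  Both sides obey the same recursion in the leftmost lower ball \<open>c\<close>. If column \<open>c\<close> carries an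
  upper ball, the pairing of \<open>c\<close> is forced (or impossible), and correspondingly the vertex at
  \<open>c\<close> is the identity (or zero). Otherwise the vertex at \<open>c\<close> is the creation operator \<open>a\<^sup>+\<close>.
  Commuting it once around the trace, using \<open>z a\<^sup>+ = t\<^bsup>j\<^esub> a\<^sup>+ z + \<beta>(z) \<rho>(z)\<close> for a vertex
  \<open>z\<close> with top edge \<open>j\<close> and \<open>q\<^sup>h a\<^sup>+ = q a\<^sup>+ q\<^sup>h\<close>, gives
  \<open>(1 - q t\<^sup>m) T = \<Sum>\<^sub>k (1 - t) t\<^sup>s q\<^sup>w T\<^sub>k\<close>: the \<open>k\<close>-th term exchanges \<open>a\<^sup>+\<close> with the
  annihilator at an upper ball \<open>k\<close>, which is exactly the choice of \<open>k\<close> as partner of \<open>c\<close> with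
  its pairing weight, and \<open>T\<^sub>k\<close> is the trace for the configuration with \<open>c\<close> and \<open>k\<close> removed.
\<close>

section \<open>Traces of words of vertex operators\<close>

type_synonym vertex = "nat \<times> nat \<times> nat \<times> nat"

definition vertex_op :: "vertex \<Rightarrow> (nat \<Rightarrow> K) \<Rightarrow> (nat \<Rightarrow> K)" where
  "vertex_op = (\<lambda>(a, b, i, j). Sv a b i j)"

fun word_op :: "vertex list \<Rightarrow> (nat \<Rightarrow> K) \<Rightarrow> (nat \<Rightarrow> K)" where
  "word_op [] = id"
| "word_op (z # zs) = vertex_op z \<circ> word_op zs"

definition word_trace :: "vertex list \<Rightarrow> K fps" where
  "word_trace zs = trace_qh (word_op zs)"

abbreviation empty_vertex :: vertex where "empty_vertex \<equiv> (0, 0, 0, 0)"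

text \<open>Spelled with \<open>Suc 0\<close>: the simplifier rewrites \<open>1 :: nat\<close> to \<open>Suc 0\<close> in these terms, and the
  abbreviation has to match the normal form.\<close>

abbreviation creation_vertex :: vertex where "creation_vertex \<equiv> (0, 0, Suc 0, 0)"

definition has_upper :: "vertex \<Rightarrow> bool" where
  "has_upper = (\<lambda>(a, b, i, j). j = 1)"

definition upper_count :: "vertex list \<Rightarrow> nat" where
  "upper_count zs = length (filter has_upper zs)"

text \<open>The coefficient \<open>\<beta>\<close> and the vertex \<open>\<rho>\<close> of \<open>z a\<^sup>+ = t\<^bsup>j\<^esub> a\<^sup>+ z + \<beta>(z) \<rho>(z)\<close>. Besides
  \<open>a\<^sup>- a\<^sup>+ = t a\<^sup>+ a\<^sup>- + (1 - t)\<close>, this also covers the identity vertex \<open>(1, 0, 1, 1)\<close>, where it reads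
  \<open>a\<^sup>+ = t a\<^sup>+ + (1 - t) a\<^sup>+\<close>.\<close>

definition exchange_coeff :: "vertex \<Rightarrow> K" where
  "exchange_coeff = (\<lambda>(a, b, i, j). if a = 1 \<and> j = 1 then 1 - tt else 0)"

definition exchange_vertex :: "vertex \<Rightarrow> vertex" where
  "exchange_vertex = (\<lambda>(a, b, i, j). (0, b, i, 0))"

lemma word_op_append: "word_op (xs @ ys) = word_op xs \<circ> word_op ys"
  by (induction xs) auto

lemma upper_count_append [simp]: "upper_count (xs @ ys) = upper_count xs + upper_count ys"
  by (simp add: upper_count_def)

lemma upper_count_Cons [simp]: "upper_count (z # zs) = (if has_upper z then 1 else 0) + upper_count zs"
  by (simp add: upper_count_def)

lemma upper_count_Nil [simp]: "upper_count [] = 0"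
  by (simp add: upper_count_def)

lemma drop_take_eq_map_nth: "e \<le> length w \<Longrightarrow> drop s (take e w) = map (nth w) [s..<e]"
  by (rule nth_equalityI) auto

lemma upper_count_drop_take:
  assumes "e \<le> length w"
  shows "upper_count (drop s (take e w)) = card {x \<in> {s..<e}. has_upper (w ! x)}"
proof -
  have "{x \<in> {s..<e}. has_upper (w ! x)} = {x. has_upper (w ! x)} \<inter> set [s..<e]"
    by auto
  then show ?thesis
    using assms by (simp add: upper_count_def drop_take_eq_map_nth distinct_length_filter)
qed

definition linear_op :: "(('a \<Rightarrow> 'b::semiring_0) \<Rightarrow> ('c \<Rightarrow> 'b)) \<Rightarrow> bool" where
  "linear_op f \<longleftrightarrow> (\<forall>x y v w. f (\<lambda>d. x * v d + y * w d) = (\<lambda>d. x * f v d + y * f w d))"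

lemma linear_op_zero: "linear_op f \<Longrightarrow> f (\<lambda>_. 0) = (\<lambda>_. 0)"
  unfolding linear_op_def by (drule spec[of _ 0], drule spec[of _ 0]) simp

lemma linear_op_comp: "linear_op f \<Longrightarrow> linear_op g \<Longrightarrow> linear_op (f \<circ> g)"
  by (simp add: linear_op_def)

lemma linear_op_Sv: "linear_op (Sv a b i j)"
  unfolding linear_op_def Sv_def aplus_def aminus_def kop_def
  by (auto simp: fun_eq_iff algebra_simps)

lemma linear_op_vertex_op: "linear_op (vertex_op z)"
  by (cases z) (simp add: vertex_op_def linear_op_Sv)

lemma linear_op_word_op: "linear_op (word_op zs)"
proof (induction zs)
  case Nil
  show ?case by (simp add: linear_op_def)
next
  case (Cons z zs)
  show ?case unfolding word_op.simps by (rule linear_op_comp[OF linear_op_vertex_op Cons.IH])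
qed

lemma trace_qh_lincomb:
  "trace_qh (\<lambda>v d. x * F v d + y * G v d) = fps_const x * trace_qh F + fps_const y * trace_qh G"
  by (simp add: trace_qh_def fps_eq_iff)

lemma vertex_op_creation: "vertex_op creation_vertex = aplus"
  by (simp add: vertex_op_def Sv_def)

lemma vertex_op_aplus_commute:
  "vertex_op z (aplus v) =
     (\<lambda>d. tt ^ upper_count [z] * aplus (vertex_op z v) d + exchange_coeff z * vertex_op (exchange_vertex z) v d)"
proof -
  have pow: "0 < n \<Longrightarrow> tt * tt ^ (n - Suc 0) = tt ^ n" for n
    by (metis Suc_pred power_Suc)
  obtain a b i j where "z = (a, b, i, j)" by (cases z)
  then show ?thesis
    by (auto simp: vertex_op_def Sv_def has_upper_def exchange_coeff_def exchange_vertex_def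
        aplus_def aminus_def kop_def fun_eq_iff algebra_simps pow)
qed

lemma word_trace_commute:
  "word_trace (P @ z # creation_vertex # Q) =
     fps_const (tt ^ upper_count [z]) * word_trace (P @ creation_vertex # z # Q)
     + fps_const (exchange_coeff z) * word_trace (P @ exchange_vertex z # Q)"
proof -
  have "word_op (P @ z # creation_vertex # Q) =
    (\<lambda>v d. tt ^ upper_count [z] * word_op (P @ creation_vertex # z # Q) v d
           + exchange_coeff z * word_op (P @ exchange_vertex z # Q) v d)"
  proof
    fix v
    have "word_op (P @ z # creation_vertex # Q) v = word_op P (vertex_op z (aplus (word_op Q v)))"
      by (simp add: word_op_append vertex_op_creation)
    also have "\<dots> = word_op P (\<lambda>d. tt ^ upper_count [z] * aplus (vertex_op z (word_op Q v)) d
        + exchange_coeff z * vertex_op (exchange_vertex z) (word_op Q v) d)"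
      by (simp only: vertex_op_aplus_commute)
    also have "\<dots> = (\<lambda>d. tt ^ upper_count [z] * word_op (P @ creation_vertex # z # Q) v d
        + exchange_coeff z * word_op (P @ exchange_vertex z # Q) v d)"
      using linear_op_word_op[of P] by (simp add: linear_op_def word_op_append vertex_op_creation)
    finally show "word_op (P @ z # creation_vertex # Q) v = \<dots>" .
  qed
  then show ?thesis
    by (simp add: word_trace_def trace_qh_lincomb)
qed

lemma aplus_basis: "aplus (basis e) = basis (Suc e)"
  by (auto simp: aplus_def basis_def fun_eq_iff)

text \<open>Cyclicity of the trace, for the creation operator only: \<open>a\<^sup>+\<close> shifts the grading by one,
  which is compensated by \<open>q\<^sup>h\<close>.\<close>

lemma word_trace_rotate_creation:
  "word_trace (creation_vertex # zs) = fps_X * word_trace (zs @ [creation_vertex])"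
proof (rule fps_ext)
  fix d
  show "fps_nth (word_trace (creation_vertex # zs)) d = fps_nth (fps_X * word_trace (zs @ [creation_vertex])) d"
  proof (cases d)
    case 0
    then show ?thesis by (simp add: word_trace_def trace_qh_def vertex_op_creation aplus_def)
  next
    case (Suc e)
    have "word_op (zs @ [creation_vertex]) (basis e) = word_op zs (basis (Suc e))"
      by (simp add: word_op_append vertex_op_creation aplus_basis)
    with Suc show ?thesis
      by (simp add: word_trace_def trace_qh_def vertex_op_creation aplus_def)
  qed
qed

lemma word_trace_move_creation:
  "word_trace (P @ X @ creation_vertex # Q) =
     fps_const (tt ^ upper_count X) * word_trace (P @ creation_vertex # X @ Q)
     + (\<Sum>p<length X. fps_const (exchange_coeff (X ! p) * tt ^ upper_count (drop (Suc p) X))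
          * word_trace (P @ X[p := exchange_vertex (X ! p)] @ Q))"
proof (induction X arbitrary: Q rule: rev_induct)
  case Nil
  then show ?case by simp
next
  case (snoc z X)
  let ?c = "\<lambda>p. fps_const (exchange_coeff (X ! p) * tt ^ upper_count (drop (Suc p) X))"
  have "word_trace (P @ (X @ [z]) @ creation_vertex # Q) =
      fps_const (tt ^ upper_count [z]) * word_trace (P @ X @ creation_vertex # z # Q)
      + fps_const (exchange_coeff z) * word_trace (P @ X @ exchange_vertex z # Q)"
    using word_trace_commute[of "P @ X"] by simp
  also have "word_trace (P @ X @ creation_vertex # z # Q) =
      fps_const (tt ^ upper_count X) * word_trace (P @ creation_vertex # X @ z # Q)
      + (\<Sum>p<length X. ?c p * word_trace (P @ X[p := exchange_vertex (X ! p)] @ z # Q))"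
    by (rule snoc.IH)
  also have "(\<Sum>p<length (X @ [z]). fps_const (exchange_coeff ((X @ [z]) ! p)
        * tt ^ upper_count (drop (Suc p) (X @ [z])))
        * word_trace (P @ (X @ [z])[p := exchange_vertex ((X @ [z]) ! p)] @ Q))
      = (\<Sum>p<length X. fps_const (tt ^ upper_count [z]) * (?c p
          * word_trace (P @ X[p := exchange_vertex (X ! p)] @ z # Q)))
        + fps_const (exchange_coeff z) * word_trace (P @ X @ exchange_vertex z # Q)"
    by (simp add: nth_append list_update_append power_add mult_ac fps_const_mult[symmetric]
        del: fps_const_mult)
  ultimately show ?case
    by (simp add: algebra_simps power_add sum_distrib_left fps_const_mult[symmetric] del: fps_const_mult)
qed

lemma word_trace_recursion_split:
  assumes "w = X @ creation_vertex # Y"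
  shows "(1 - fps_const (tt ^ upper_count w) * fps_X) * word_trace w =
    (\<Sum>p<length X. fps_const (exchange_coeff (X ! p) * tt ^ upper_count (drop (Suc p) X))
       * word_trace (X[p := exchange_vertex (X ! p)] @ Y))
    + fps_X * fps_const (tt ^ upper_count X) *
      (\<Sum>p<length Y. fps_const (exchange_coeff (Y ! p) * tt ^ upper_count (drop (Suc p) Y))
         * word_trace (X @ Y[p := exchange_vertex (Y ! p)]))"
    (is "_ = ?S1 + _ * ?S2")
proof -
  have "word_trace w = fps_const (tt ^ upper_count X) * word_trace (creation_vertex # X @ Y) + ?S1"
    using word_trace_move_creation[of "[]" X Y] assms by simp
  also have "word_trace (creation_vertex # X @ Y) = fps_X * word_trace (X @ Y @ [creation_vertex])"
    using word_trace_rotate_creation[of "X @ Y"] by simp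
  also have "word_trace (X @ Y @ [creation_vertex]) = fps_const (tt ^ upper_count Y) * word_trace w + ?S2"
    using word_trace_move_creation[of X Y "[]"] assms by simp
  finally have "word_trace w =
      fps_const (tt ^ upper_count w) * fps_X * word_trace w + (?S1 + fps_X * fps_const (tt ^ upper_count X) * ?S2)"
    using assms by (simp add: algebra_simps power_add has_upper_def fps_const_mult[symmetric] del: fps_const_mult)
  then show ?thesis
    by (simp add: algebra_simps)
qed

lemma word_trace_remove_id:
  "vertex_op z = id \<Longrightarrow> word_trace (P @ z # Q) = word_trace (P @ Q)"
  by (simp add: word_trace_def word_op_append)

lemma word_trace_eq_0:
  assumes "vertex_op z = (\<lambda>v _. 0)"
  shows "word_trace (P @ z # Q) = 0"
proof -
  have "word_op (P @ z # Q) = (\<lambda>v _. 0)"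
    by (rule ext) (simp add: word_op_append assms linear_op_zero[OF linear_op_word_op])
  then show ?thesis by (simp add: word_trace_def trace_qh_def fps_zero_def)
qed

lemma word_trace_eq_0_nth:
  "k < length w \<Longrightarrow> vertex_op (w ! k) = (\<lambda>v _. 0) \<Longrightarrow> word_trace w = 0"
  by (metis id_take_nth_drop word_trace_eq_0)

lemma sum_lessThan_remove_split:
  assumes "c < n"
  shows "sum f ({..<n} - {c}) = (\<Sum>p<c. f p) + (\<Sum>p<n - Suc c. f (Suc c + p))"
proof -
  have split: "{..<n} - {c} = {..<c} \<union> {Suc c..<n}"
    using assms by auto
  have "sum f ({..<n} - {c}) = (\<Sum>p<c. f p) + sum f {Suc c..<n}"
    unfolding split by (rule sum.union_disjoint) auto
  also have "sum f {Suc c..<n} = (\<Sum>p<n - Suc c. f (Suc c + p))"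
    by (subst sum.atLeastLessThan_shift_0) (simp add: comp_def lessThan_atLeast0)
  finally show ?thesis .
qed

lemma card_filter_between_wrap:
  assumes "c < k" "k < n"
  shows "card {x \<in> between n k c. P x} = card {x \<in> {Suc k..<n}. P x} + card {x \<in> {0..<c}. P x}"
proof -
  have split: "{x \<in> between n k c. P x} = {x \<in> {Suc k..<n}. P x} \<union> {x \<in> {0..<c}. P x}"
    using assms by (auto simp: between_def)
  show ?thesis
    unfolding split by (rule card_Un_disjoint) (use assms in auto)
qed

lemma word_trace_recursion:
  assumes c: "c < length w" "w ! c = creation_vertex"
  shows "(1 - fps_const (tt ^ upper_count w) * fps_X) * word_trace w =
    (\<Sum>k \<in> {..<length w} - {c}.
       fps_const (exchange_coeff (w ! k) * tt ^ card {x \<in> between (length w) k c. has_upper (w ! x)})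
       * fps_X ^ (if c < k then 1 else 0)
       * word_trace (w[c := empty_vertex, k := exchange_vertex (w ! k)]))"
    (is "_ = sum ?f _")
proof -
  define X Y where "X = take c w" and "Y = drop (Suc c) w"
  have w: "w = X @ creation_vertex # Y"
    using c id_take_nth_drop[OF c(1)] by (simp add: X_def Y_def)
  have lenX: "length X = c" and lenY: "length w = Suc c + length Y"
    using c by (simp_all add: X_def Y_def)
  have empty_id: "vertex_op empty_vertex = id"
    by (simp add: vertex_op_def Sv_def)
  have "sum ?f ({..<length w} - {c}) = (\<Sum>p<c. ?f p) + (\<Sum>p<length Y. ?f (Suc c + p))"
  proof -
    have len_rest: "length w - Suc c = length Y"
      using lenY by simp
    show ?thesis
      unfolding sum_lessThan_remove_split[OF c(1)] len_rest ..
  qed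
  also have "(\<Sum>p<c. ?f p) =
      (\<Sum>p<length X. fps_const (exchange_coeff (X ! p) * tt ^ upper_count (drop (Suc p) X))
         * word_trace (X[p := exchange_vertex (X ! p)] @ Y))"
  proof (rule sum.cong)
    fix p assume "p \<in> {..<length X}"
    then have p: "p < c" using lenX by simp
    have "w[c := empty_vertex, p := exchange_vertex (w ! p)] = X[p := exchange_vertex (X ! p)] @ empty_vertex # Y"
      using p lenX by (simp add: w list_update_append nth_append)
    moreover have "between (length w) p c = {Suc p..<c}"
      using p by (simp add: between_def atLeastSucLessThan_greaterThanLessThan)
    ultimately show "?f p = fps_const (exchange_coeff (X ! p) * tt ^ upper_count (drop (Suc p) X))
        * word_trace (X[p := exchange_vertex (X ! p)] @ Y)"
      using p c by (simp add: X_def upper_count_drop_take word_trace_remove_id[OF empty_id])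
  qed (simp add: lenX)
  also have "(\<Sum>p<length Y. ?f (Suc c + p)) = fps_X * fps_const (tt ^ upper_count X) *
      (\<Sum>p<length Y. fps_const (exchange_coeff (Y ! p) * tt ^ upper_count (drop (Suc p) Y))
         * word_trace (X @ Y[p := exchange_vertex (Y ! p)]))"
    unfolding sum_distrib_left
  proof (rule sum.cong)
    fix p assume "p \<in> {..<length Y}"
    then have p: "Suc c + p < length w" using lenY by simp
    have upd: "w[c := empty_vertex, Suc c + p := exchange_vertex (w ! (Suc c + p))] =
        X @ empty_vertex # Y[p := exchange_vertex (Y ! p)]"
      using lenX by (simp add: w list_update_append nth_append)
    have count_X: "upper_count X = card {x \<in> {0..<c}. has_upper (w ! x)}"
      using upper_count_drop_take[of c w 0] c(1) by (simp add: X_def)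
    have count_Y: "upper_count (drop (Suc p) Y) = card {x \<in> {Suc (Suc c + p)..<length w}. has_upper (w ! x)}"
      using upper_count_drop_take[of "length w" w "Suc (Suc c + p)"] by (simp add: Y_def add.commute)
    have cnt: "card {x \<in> between (length w) (Suc c + p) c. has_upper (w ! x)} =
        upper_count (drop (Suc p) Y) + upper_count X"
      unfolding count_X count_Y using card_filter_between_wrap[of c "Suc c + p" "length w"] p by simp
    show "?f (Suc c + p) = fps_X * fps_const (tt ^ upper_count X) *
        (fps_const (exchange_coeff (Y ! p) * tt ^ upper_count (drop (Suc p) Y))
         * word_trace (X @ Y[p := exchange_vertex (Y ! p)]))"
      using c upd cnt by (simp add: Y_def word_trace_remove_id[OF empty_id] power_add mult_ac
          fps_const_mult[symmetric] del: fps_const_mult)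
  qed simp
  finally show ?thesis
    using word_trace_recursion_split[OF w] by simp
qed

lemma word_op_diagonal:
  "\<forall>z \<in> set w. z = empty_vertex \<or> z = (0, 1, 0, 1) \<Longrightarrow> word_op w v = (\<lambda>e. (tt ^ e) ^ upper_count w * v e)"
  by (induction w arbitrary: v)
    (auto simp: vertex_op_def Sv_def kop_def has_upper_def fun_eq_iff power_add mult_ac)

lemma geometric_fps: "(1 - fps_const (c::'a::field) * fps_X) * Abs_fps (\<lambda>d. c ^ d) = 1"
proof -
  have "(1 - fps_const c * fps_X) * Abs_fps (\<lambda>d. c ^ d) =
      Abs_fps (\<lambda>d. c ^ d) - fps_X * (fps_const c * Abs_fps (\<lambda>d. c ^ d))"
    by (simp add: algebra_simps)
  also have "\<dots> = 1"
  proof (rule fps_ext)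
    fix n show "fps_nth (Abs_fps (\<lambda>d. c ^ d) - fps_X * (fps_const c * Abs_fps (\<lambda>d. c ^ d))) n = fps_nth 1 n"
      by (cases n) simp_all
  qed
  finally show ?thesis .
qed

lemma word_trace_diagonal:
  assumes "\<forall>z \<in> set w. z = empty_vertex \<or> z = (0, 1, 0, 1)"
  shows "(1 - fps_const (tt ^ upper_count w) * fps_X) * word_trace w = 1"
proof -
  have "word_trace w = Abs_fps (\<lambda>d. (tt ^ upper_count w) ^ d)"
    using word_op_diagonal[OF assms]
    by (simp add: word_trace_def trace_qh_def basis_def power_mult[symmetric] mult.commute)
  then show ?thesis using geometric_fps by simp
qed

section \<open>Pairings\<close>

text \<open>A recursive reading of \<open>valid_pairing\<close>: the first lower ball \<open>c\<close> picks an upper ball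
  \<open>d\<close> from the free set \<open>F\<close>, and the remaining lower balls are paired with \<open>F - {d}\<close>.\<close>

fun is_pairing :: "nat list \<Rightarrow> nat set \<Rightarrow> nat list \<Rightarrow> bool" where
  "is_pairing [] F [] = True"
| "is_pairing (c # cl) F (d # ds) = (d \<in> F \<and> (c \<in> F \<longrightarrow> d = c) \<and> is_pairing cl (F - {d}) ds)"
| "is_pairing _ _ _ = False"

fun pairing_weight :: "nat \<Rightarrow> nat list \<Rightarrow> nat set \<Rightarrow> nat list \<Rightarrow> K fps" where
  "pairing_weight L (c # cl) F (d # ds) = choice_wt L c d F * pairing_weight L cl (F - {d}) ds"
| "pairing_weight L _ _ _ = 1"

definition pairing_sum :: "nat \<Rightarrow> nat list \<Rightarrow> nat set \<Rightarrow> nat set \<Rightarrow> K fps" where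
  "pairing_sum L cl F A = (\<Sum>ds \<in> {ds. is_pairing cl F ds \<and> set ds = A}. pairing_weight L cl F ds)"

lemma is_pairing_iff_nth:
  "is_pairing cl F ds \<longleftrightarrow> length ds = length cl \<and>
     (\<forall>k < length ds. let G = F - set (take k ds) in ds ! k \<in> G \<and> (cl ! k \<in> G \<longrightarrow> ds ! k = cl ! k))"
proof (induction ds arbitrary: cl F)
  case Nil
  then show ?case by (cases cl) auto
next
  case (Cons d ds)
  have free: "F - set (take (Suc k) (d # ds)) = F - {d} - set (take k ds)" for k
    by auto
  show ?case
  proof (cases cl)
    case (Cons c cl')
    have "(\<forall>k < length (d # ds). let G = F - set (take k (d # ds)) in (d # ds) ! k \<in> G \<and> (cl ! k \<in> G \<longrightarrow> (d # ds) ! k = cl ! k))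
      \<longleftrightarrow> d \<in> F \<and> (c \<in> F \<longrightarrow> d = c) \<and>
         (\<forall>k < length ds. let G = F - {d} - set (take k ds) in ds ! k \<in> G \<and> (cl' ! k \<in> G \<longrightarrow> ds ! k = cl' ! k))"
      unfolding All_less_Suc2 length_Cons free by (simp add: Cons)
    then show ?thesis using Cons.IH by (simp add: Cons) blast
  qed simp
qed

lemma valid_pairing_iff: "valid_pairing L i j ds \<longleftrightarrow> is_pairing (lower_list L i) (balls L j) ds"
  by (simp add: valid_pairing_def is_pairing_iff_nth Let_def)

lemma pairing_weight_eq_prod:
  "length ds = length cl \<Longrightarrow>
     pairing_weight L cl F ds = (\<Prod>k < length ds. choice_wt L (cl ! k) (ds ! k) (F - set (take k ds)))"
proof (induction ds arbitrary: cl F)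
  case Nil
  then show ?case by simp
next
  case (Cons d ds)
  then obtain c cl' where "cl = c # cl'" by (cases cl) auto
  moreover have "F - set (take (Suc k) (d # ds)) = F - {d} - set (take k ds)" for k
    by auto
  ultimately show ?case
    using Cons unfolding length_Cons prod.lessThan_Suc_shift by (simp del: take_Suc_Cons)
qed

lemma is_pairingD: "is_pairing cl F ds \<Longrightarrow> length ds = length cl \<and> set ds \<subseteq> F \<and> distinct ds"
  by (induction cl F ds rule: is_pairing.induct) auto

lemma finite_pairings: "finite F \<Longrightarrow> finite {ds. is_pairing cl F ds \<and> P ds}"
proof (rule finite_subset)
  show "{ds. is_pairing cl F ds \<and> P ds} \<subseteq> {ds. set ds \<subseteq> F \<and> length ds = length cl}"
    by (auto dest: is_pairingD)
qed (rule finite_lists_length_eq)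

lemma pairing_sum_Nil: "pairing_sum L [] F {} = 1"
proof -
  have "{ds. is_pairing [] F ds \<and> set ds = {}} = {[]}"
    by auto
  then show ?thesis by (simp add: pairing_sum_def)
qed

lemma pairing_sum_Cons:
  assumes "finite F"
  shows "pairing_sum L (c # cl) F A =
    (\<Sum>d \<in> {d \<in> F \<inter> A. c \<in> F \<longrightarrow> d = c}. choice_wt L c d F * pairing_sum L cl (F - {d}) (A - {d}))"
proof -
  define C where "C = {d \<in> F \<inter> A. c \<in> F \<longrightarrow> d = c}"
  define S where "S d = {ds. is_pairing cl (F - {d}) ds \<and> set ds = A - {d}}" for d
  have pairings: "{ds. is_pairing (c # cl) F ds \<and> set ds = A} = (\<lambda>(d, ds). d # ds) ` (SIGMA d:C. S d)"
  proof (intro set_eqI iffI)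
    fix ds assume "ds \<in> {ds. is_pairing (c # cl) F ds \<and> set ds = A}"
    then obtain d ds' where ds: "ds = d # ds'" "d \<in> F" "c \<in> F \<longrightarrow> d = c"
      "is_pairing cl (F - {d}) ds'" "set ds = A"
      by (cases ds) auto
    then have "d \<notin> set ds'"
      using is_pairingD by blast
    with ds have "(d, ds') \<in> (SIGMA d:C. S d)"
      unfolding C_def S_def by auto
    with ds(1) show "ds \<in> (\<lambda>(d, ds). d # ds) ` (SIGMA d:C. S d)"
      by (simp add: image_iff)
  next
    fix ds assume "ds \<in> (\<lambda>(d, ds). d # ds) ` (SIGMA d:C. S d)"
    then obtain d ds' where "ds = d # ds'" "d \<in> C" "ds' \<in> S d"
      by auto
    then show "ds \<in> {ds. is_pairing (c # cl) F ds \<and> set ds = A}"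
      unfolding C_def S_def by auto
  qed
  have fin: "finite C" "\<And>d. finite (S d)"
    using assms by (simp_all add: C_def S_def finite_pairings)
  have inj: "inj_on (\<lambda>(d, ds). d # ds) (SIGMA d:C. S d)"
    by (auto simp: inj_on_def)
  have "pairing_sum L (c # cl) F A = (\<Sum>(d, ds) \<in> (SIGMA d:C. S d). pairing_weight L (c # cl) F (d # ds))"
    unfolding pairing_sum_def pairings sum.reindex[OF inj] by (simp add: comp_def case_prod_beta)
  also have "\<dots> = (\<Sum>d\<in>C. \<Sum>ds\<in>S d. pairing_weight L (c # cl) F (d # ds))"
    using fin by (simp add: sum.Sigma)
  also have "\<dots> = (\<Sum>d\<in>C. choice_wt L c d F * pairing_sum L cl (F - {d}) (A - {d}))"
    by (simp add: pairing_sum_def S_def sum_distrib_left)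
  finally show ?thesis unfolding C_def .
qed

section \<open>Configurations and their column words\<close>

definition binary_vec :: "nat \<Rightarrow> nat list \<Rightarrow> bool" where
  "binary_vec L x \<longleftrightarrow> length x = L \<and> set x \<subseteq> {0, 1}"

definition admissible :: "nat \<Rightarrow> nat list \<Rightarrow> nat list \<Rightarrow> nat list \<Rightarrow> nat list \<Rightarrow> bool" where
  "admissible L a b i j \<longleftrightarrow> binary_vec L a \<and> binary_vec L b \<and> binary_vec L i \<and> binary_vec L j
     \<and> (\<forall>k < L. a ! k + b ! k = j ! k)"

definition col_word :: "nat \<Rightarrow> nat list \<Rightarrow> nat list \<Rightarrow> nat list \<Rightarrow> nat list \<Rightarrow> vertex list" where
  "col_word L a b i j = map (\<lambda>k. (a ! k, b ! k, i ! k, j ! k)) [0..<L]"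

lemma binary_vec_nth: "binary_vec L x \<Longrightarrow> k < L \<Longrightarrow> x ! k = 0 \<or> x ! k = 1"
  unfolding binary_vec_def by (metis insertE nth_mem singletonD subsetD)

lemma binary_vec_update: "binary_vec L x \<Longrightarrow> binary_vec L (x[k := 0])"
  unfolding binary_vec_def using set_update_subset_insert[of x k 0] by auto

lemma admissible_upper:
  assumes "admissible L a b i j" "k < L" "a ! k = 1"
  shows "b ! k = 0" "j ! k = 1"
  using assms binary_vec_nth[of L j k] by (auto simp: admissible_def)

lemma admissible_update:
  assumes "admissible L a b i j" "k < L" "c < L" "a ! k = 1"
  shows "admissible L (a[k := 0]) b (i[c := 0]) (j[k := 0])"
proof -
  have "length a = L" "length j = L"
    using assms by (auto simp: admissible_def binary_vec_def)
  then show ?thesis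
    using admissible_upper[OF assms(1,2,4)] assms
    by (auto simp: admissible_def binary_vec_update nth_list_update)
qed

lemma balls_update: "length x = L \<Longrightarrow> k < L \<Longrightarrow> balls L (x[k := 0]) = balls L x - {k}"
  by (auto simp: balls_def nth_list_update split: if_splits)

lemma finite_balls [simp]: "finite (balls L x)"
  by (simp add: balls_def)

lemma set_lower_list: "set (lower_list L x) = balls L x"
  by (auto simp: lower_list_def balls_def)

lemma sum_list_binary_vec: "binary_vec L x \<Longrightarrow> sum_list x = card (balls L x)"
proof -
  assume x: "binary_vec L x"
  have "sum_list x = (\<Sum>k<L. if x ! k = 1 then 1 else 0)"
    unfolding sum_list_sum_nth
  proof (rule sum.cong)
    fix k assume "k \<in> {..<L}"
    then show "x ! k = (if x ! k = 1 then 1 else 0)"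
      using binary_vec_nth[OF x, of k] by auto
  qed (use x in \<open>auto simp: binary_vec_def\<close>)
  also have "\<dots> = card (balls L x)"
    by (simp add: sum.If_cases balls_def Int_def)
  finally show ?thesis .
qed

lemma lower_list_update:
  assumes "lower_list L i = c # rest" "length i = L"
  shows "lower_list L (i[c := 0]) = rest"
proof -
  obtain us vs where split: "[0..<L] = us @ c # vs" "\<forall>k \<in> set us. i ! k \<noteq> 1" "i ! c = 1"
      "rest = filter (\<lambda>k. i ! k = 1) vs"
    using assms(1) unfolding lower_list_def filter_eq_Cons_iff by blast
  moreover have "distinct (us @ c # vs)"
    using distinct_upt[of 0 L] split(1) by metis
  moreover have "c < L"
    using split(1) by (metis atLeastLessThan_iff in_set_conv_decomp set_upt)
  ultimately have "c \<notin> set us" "c \<notin> set vs" "c < L"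
    by auto
  then have "filter (\<lambda>k. i[c := 0] ! k = 1) vs = rest"
    using split(4) assms(2) by (auto simp: nth_list_update intro: filter_cong)
  moreover have "filter (\<lambda>k. i[c := 0] ! k = 1) us = []"
    using split(2) \<open>c \<notin> set us\<close> \<open>c < L\<close> assms(2) by (auto simp: filter_empty_conv nth_list_update)
  ultimately show ?thesis
    using assms(2) \<open>c < L\<close> by (simp add: lower_list_def split(1))
qed

lemma Sprod_eq_word_op: "Sprod L a b i j = word_op (col_word L a b i j)"
proof -
  have "foldr (\<circ>) (map (\<lambda>k. Sv (a ! k) (b ! k) (i ! k) (j ! k)) ks) id
      = word_op (map (\<lambda>k. (a ! k, b ! k, i ! k, j ! k)) ks)" for ks
    by (induction ks) (auto simp: vertex_op_def)
  then show ?thesis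
    by (simp add: Sprod_def col_word_def)
qed

lemma Sw_eq_word_trace:
  "Sw L a b i j = (1 - fps_const (tt ^ (sum_list j - sum_list i)) * fps_X) * word_trace (col_word L a b i j)"
  by (simp add: Sw_def word_trace_def Sprod_eq_word_op)

lemma col_word_nth [simp]: "k < L \<Longrightarrow> col_word L a b i j ! k = (a ! k, b ! k, i ! k, j ! k)"
  by (simp add: col_word_def)

lemma length_col_word [simp]: "length (col_word L a b i j) = L"
  by (simp add: col_word_def)

lemma upper_count_col_word: "upper_count (col_word L a b i j) = card (balls L j)"
proof -
  have "{x \<in> {0..<L}. has_upper (col_word L a b i j ! x)} = balls L j"
    by (auto simp: balls_def has_upper_def)
  then show ?thesis
    using upper_count_drop_take[of L "col_word L a b i j" 0] by simp
qed

lemma col_word_update: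
  assumes "length a = L" "length i = L" "length j = L" "k < L" "c < L"
  shows "col_word L (a[k := 0]) b (i[c := 0]) (j[k := 0]) =
    (col_word L a b i j)[c := (a ! c, b ! c, 0, j ! c), k := (0, b ! k, i[c := 0] ! k, 0)]"
  using assms by (intro nth_equalityI) (auto simp: nth_list_update col_word_def)

lemma exchange_coeff_col_word:
  assumes "admissible L a b i j" "k < L"
  shows "exchange_coeff (col_word L a b i j ! k) = (if a ! k = 1 then 1 - tt else 0)"
proof -
  have "a ! k + b ! k = j ! k"
    using assms by (simp add: admissible_def)
  then show ?thesis
    using assms binary_vec_nth[of L b k] binary_vec_nth[of L j k]
    by (auto simp: admissible_def exchange_coeff_def)
qed

lemma Sv_eq_0: "a + b \<noteq> j \<Longrightarrow> Sv a b i j = (\<lambda>v _. 0)"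
  by (auto simp: Sv_def)

section \<open>The recursion in the leftmost lower ball\<close>

lemma Mw_eq_pairing_sum:
  assumes "admissible L a b i j"
  shows "Mw L a b i j = pairing_sum L (lower_list L i) (balls L j) (balls L a)"
proof -
  have "pairing_wt L i j ds = pairing_weight L (lower_list L i) (balls L j) ds"
    if "is_pairing (lower_list L i) (balls L j) ds" for ds
    using that is_pairingD pairing_weight_eq_prod by (simp add: pairing_wt_def)
  then show ?thesis
    using assms by (simp add: Mw_def pairing_sum_def admissible_def valid_pairing_iff)
qed

lemma pairing_sum_step_paired:
  assumes adm: "admissible L a b i j" and c: "c < L" "i ! c = 1" "a ! c = 1"
    and IH: "pairing_sum L rest (balls L j - {c}) (balls L a - {c}) =
      N * word_trace (col_word L (a[c := 0]) b (i[c := 0]) (j[c := 0]))"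
  shows "pairing_sum L (c # rest) (balls L j) (balls L a) = N * word_trace (col_word L a b i j)"
proof -
  define w where "w = col_word L a b i j"
  have abj: "b ! c = 0" "j ! c = 1"
    using admissible_upper[OF adm] c by auto
  then have "{d \<in> balls L j \<inter> balls L a. c \<in> balls L j \<longrightarrow> d = c} = {c}"
    using c by (auto simp: balls_def)
  then have "pairing_sum L (c # rest) (balls L j) (balls L a) = N * word_trace (w[c := empty_vertex])"
    using IH adm c abj
    by (simp add: pairing_sum_Cons choice_wt_def w_def col_word_update admissible_def binary_vec_def)
  also have "word_trace (w[c := empty_vertex]) = word_trace w"
  proof -
    have ids: "vertex_op empty_vertex = id" "vertex_op (w ! c) = id"
      using c abj by (simp_all add: w_def vertex_op_def Sv_def)
    have "c < length w" using c by (simp add: w_def)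
    then show ?thesis
      using word_trace_remove_id[OF ids(1)] word_trace_remove_id[OF ids(2)]
      by (metis id_take_nth_drop upd_conv_take_nth_drop)
  qed
  finally show ?thesis unfolding w_def .
qed

lemma pairing_sum_step_blocked:
  assumes adm: "admissible L a b i j" and c: "c < L" "i ! c = 1" "j ! c = 1" "a ! c = 0"
  shows "pairing_sum L (c # rest) (balls L j) (balls L a) = N * word_trace (col_word L a b i j)"
proof -
  have "b ! c = 1"
    using adm c by (auto simp: admissible_def)
  then have "vertex_op (col_word L a b i j ! c) = (\<lambda>v _. 0)"
    using c by (simp add: vertex_op_def Sv_def)
  then have "word_trace (col_word L a b i j) = 0"
    using c by (simp add: word_trace_eq_0_nth)
  moreover have "{d \<in> balls L j \<inter> balls L a. c \<in> balls L j \<longrightarrow> d = c} = {}"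
    using c by (auto simp: balls_def)
  then have "pairing_sum L (c # rest) (balls L j) (balls L a) = 0"
    by (simp only: pairing_sum_Cons[OF finite_balls] sum.empty)
  ultimately show ?thesis
    by simp
qed

lemma word_trace_col_word_recursion:
  assumes adm: "admissible L a b i j" and c: "c < L" "i ! c = 1" "j ! c = 0"
  shows "(1 - fps_const (tt ^ card (balls L j)) * fps_X) * word_trace (col_word L a b i j) =
    (\<Sum>k \<in> balls L a. fps_const ((1 - tt) * tt ^ card (balls L j \<inter> between L k c))
       * fps_X ^ (if c < k then 1 else 0) * word_trace (col_word L (a[k := 0]) b (i[c := 0]) (j[k := 0])))"
proof -
  define w where "w = col_word L a b i j"
  define f where "f k = fps_const (exchange_coeff (w ! k) * tt ^ card {x \<in> between L k c. has_upper (w ! x)})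
      * fps_X ^ (if c < k then 1 else 0) * word_trace (w[c := empty_vertex, k := exchange_vertex (w ! k)])" for k
  have len: "length a = L" "length i = L" "length j = L"
    using adm by (simp_all add: admissible_def binary_vec_def)
  have ab: "a ! c = 0" "b ! c = 0"
    using adm c by (auto simp: admissible_def)
  have a_j: "balls L a \<subseteq> balls L j - {c}"
    using admissible_upper[OF adm] ab by (auto simp: balls_def)
  have coeff: "exchange_coeff (w ! k) = (if a ! k = 1 then 1 - tt else 0)" if "k < L" for k
    using exchange_coeff_col_word[OF adm that] by (simp add: w_def del: col_word_nth)
  have "w ! c = creation_vertex"
    using ab c by (simp add: w_def)
  then have "(1 - fps_const (tt ^ card (balls L j)) * fps_X) * word_trace w = (\<Sum>k \<in> {..<L} - {c}. f k)"
    using word_trace_recursion[of c w] c by (simp add: w_def f_def upper_count_col_word)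
  also have "\<dots> = (\<Sum>k \<in> balls L a. fps_const ((1 - tt) * tt ^ card (balls L j \<inter> between L k c))
       * fps_X ^ (if c < k then 1 else 0) * word_trace (col_word L (a[k := 0]) b (i[c := 0]) (j[k := 0])))"
  proof (rule sum.mono_neutral_cong_right)
    show "\<forall>k \<in> {..<L} - {c} - balls L a. f k = 0"
      using coeff by (auto simp: f_def balls_def)
    fix k assume k: "k \<in> balls L a"
    then have "k \<noteq> c" "k < L" "a ! k = 1"
      using a_j by (auto simp: balls_def)
    moreover have "{x \<in> between L k c. has_upper (w ! x)} = balls L j \<inter> between L k c"
      using c by (auto simp: between_def balls_def w_def has_upper_def)
    moreover have "w[c := empty_vertex, k := exchange_vertex (w ! k)] = col_word L (a[k := 0]) b (i[c := 0]) (j[k := 0])"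
      using calculation len ab c by (simp add: w_def col_word_update exchange_vertex_def)
    ultimately show "f k = fps_const ((1 - tt) * tt ^ card (balls L j \<inter> between L k c))
       * fps_X ^ (if c < k then 1 else 0) * word_trace (col_word L (a[k := 0]) b (i[c := 0]) (j[k := 0]))"
      using coeff[of k] by (simp add: f_def)
  qed (use a_j in \<open>auto simp: balls_def\<close>)
  finally show ?thesis unfolding w_def .
qed

text \<open>The factor \<open>1 / (1 - q t\<^sup>f)\<close> of each non-trivial choice cancels against the left-hand
  side of the trace recursion.\<close>

lemma pairing_sum_step_free:
  assumes adm: "admissible L a b i j" and c: "c < L" "i ! c = 1" "j ! c = 0"
    and IH: "\<And>k. k \<in> balls L a \<Longrightarrow> pairing_sum L rest (balls L j - {k}) (balls L a - {k}) =
      N * word_trace (col_word L (a[k := 0]) b (i[c := 0]) (j[k := 0]))"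
  shows "pairing_sum L (c # rest) (balls L j) (balls L a) = N * word_trace (col_word L a b i j)"
proof -
  define D where "D = 1 - fps_const (tt ^ card (balls L j)) * fps_X"
  have "a ! c = 0"
    using adm c by (auto simp: admissible_def)
  then have a_j: "balls L a \<subseteq> balls L j - {c}"
    using admissible_upper[OF adm] by (auto simp: balls_def)
  then have "{d \<in> balls L j \<inter> balls L a. c \<in> balls L j \<longrightarrow> d = c} = balls L a"
    using c by (auto simp: balls_def)
  then have "pairing_sum L (c # rest) (balls L j) (balls L a) =
      (\<Sum>k \<in> balls L a. choice_wt L c k (balls L j) * (N * word_trace (col_word L (a[k := 0]) b (i[c := 0]) (j[k := 0]))))"
    by (simp add: pairing_sum_Cons IH)
  also have "\<dots> = N * inverse D * (\<Sum>k \<in> balls L a. fps_const ((1 - tt) * tt ^ card (balls L j \<inter> between L k c))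
       * fps_X ^ (if c < k then 1 else 0) * word_trace (col_word L (a[k := 0]) b (i[c := 0]) (j[k := 0])))"
    unfolding sum_distrib_left
  proof (rule sum.cong)
    fix k assume "k \<in> balls L a"
    then have "k \<noteq> c" using a_j by auto
    then show "choice_wt L c k (balls L j) * (N * word_trace (col_word L (a[k := 0]) b (i[c := 0]) (j[k := 0])))
        = N * inverse D * (fps_const ((1 - tt) * tt ^ card (balls L j \<inter> between L k c))
          * fps_X ^ (if c < k then 1 else 0) * word_trace (col_word L (a[k := 0]) b (i[c := 0]) (j[k := 0])))"
      by (simp add: choice_wt_def D_def Int_commute mult_ac)
  qed simp
  also have "\<dots> = N * inverse D * (D * word_trace (col_word L a b i j))"
    unfolding D_def word_trace_col_word_recursion[OF adm c] ..
  also have "\<dots> = N * word_trace (col_word L a b i j)"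
    using inverse_mult_eq_1[of D] by (simp add: D_def mult.assoc[symmetric])
  finally show ?thesis .
qed

lemma config_remove_pair:
  assumes adm: "admissible L a b i j" and lower: "lower_list L i = c # rest" and k: "k \<in> balls L a"
  shows "admissible L (a[k := 0]) b (i[c := 0]) (j[k := 0])"
    and "Mw L (a[k := 0]) b (i[c := 0]) (j[k := 0]) = pairing_sum L rest (balls L j - {k}) (balls L a - {k})"
    and "card (balls L (i[c := 0])) = card (balls L i) - 1"
    and "card (balls L (a[k := 0])) = card (balls L a) - 1"
    and "card (balls L (j[k := 0])) = card (balls L j) - 1"
proof -
  have len: "length a = L" "length i = L" "length j = L"
    using adm by (simp_all add: admissible_def binary_vec_def)
  have c: "c \<in> balls L i" "c < L"
    using set_lower_list[of L i] lower by (auto simp: balls_def)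
  have k': "k < L" "a ! k = 1"
    using k by (auto simp: balls_def)
  then have "k \<in> balls L j"
    using admissible_upper[OF adm] by (simp add: balls_def)
  show adm': "admissible L (a[k := 0]) b (i[c := 0]) (j[k := 0])"
    using admissible_update[OF adm k'(1) c(2) k'(2)] .
  show "Mw L (a[k := 0]) b (i[c := 0]) (j[k := 0]) = pairing_sum L rest (balls L j - {k}) (balls L a - {k})"
    using len k' c by (simp add: Mw_eq_pairing_sum[OF adm'] balls_update lower_list_update[OF lower])
  show "card (balls L (i[c := 0])) = card (balls L i) - 1"
    "card (balls L (a[k := 0])) = card (balls L a) - 1"
    "card (balls L (j[k := 0])) = card (balls L j) - 1"
    using len k' c k \<open>k \<in> balls L j\<close> by (simp_all add: balls_update)
qed

lemma Mw_eq_word_trace: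
  assumes "admissible L a b i j" "card (balls L a) = card (balls L i)"
  shows "Mw L a b i j =
    (1 - fps_const (tt ^ (card (balls L j) - card (balls L i))) * fps_X) * word_trace (col_word L a b i j)"
  using assms
proof (induction "card (balls L i)" arbitrary: a i j)
  case 0
  then have empty: "balls L a = {}" "balls L i = {}"
    by simp_all
  then have "a ! k = 0" "i ! k = 0" if "k < L" for k
    using that binary_vec_nth[of L a k] binary_vec_nth[of L i k] "0.prems"(1)
    by (auto simp: admissible_def balls_def)
  then have diagonal: "\<forall>z \<in> set (col_word L a b i j). z = empty_vertex \<or> z = (0, 1, 0, 1)"
    using "0.prems"(1) binary_vec_nth[of L j] by (auto simp: col_word_def admissible_def)
  have "lower_list L i = []"
    using set_lower_list[of L i] empty by simp
  then show ?case
    using "0.prems"(1) empty word_trace_diagonal[OF diagonal]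
    by (simp add: Mw_eq_pairing_sum pairing_sum_Nil upper_count_col_word)
next
  case (Suc n)
  note adm = Suc.prems(1)
  define N where "N = 1 - fps_const (tt ^ (card (balls L j) - card (balls L i))) * fps_X"
  obtain c rest where lower: "lower_list L i = c # rest"
    using set_lower_list[of L i] Suc.hyps(2) by (cases "lower_list L i") auto
  have c: "c < L" "i ! c = 1"
    using set_lower_list[of L i] lower by (auto simp: balls_def)
  have IH: "pairing_sum L rest (balls L j - {k}) (balls L a - {k}) =
      N * word_trace (col_word L (a[k := 0]) b (i[c := 0]) (j[k := 0]))" if "k \<in> balls L a" for k
    using Suc.hyps(1)[OF _ config_remove_pair(1)[OF adm lower that]] config_remove_pair(2-5)[OF adm lower that]
      Suc.hyps(2) Suc.prems(2)
    by (simp add: N_def)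
  show ?case
    unfolding Mw_eq_pairing_sum[OF adm] lower N_def[symmetric]
  proof (cases "j ! c = 1")
    case True
    then show "pairing_sum L (c # rest) (balls L j) (balls L a) = N * word_trace (col_word L a b i j)"
      using binary_vec_nth[of L a c] adm c IH
        pairing_sum_step_paired[OF adm c] pairing_sum_step_blocked[OF adm c True]
      by (auto simp: admissible_def balls_def)
  next
    case False
    then have "j ! c = 0"
      using binary_vec_nth[of L j c] adm c by (auto simp: admissible_def)
    then show "pairing_sum L (c # rest) (balls L j) (balls L a) = N * word_trace (col_word L a b i j)"
      using pairing_sum_step_free[OF adm c] IH by blast
  qed
qed

theorem theorem4p1:
  fixes L l m :: nat and i a j b :: "nat list"
  assumes "L \<ge> 1" and "l < m" and "m \<le> L"
    and "i \<in> Bset L l" and "a \<in> Bset L l" and "j \<in> Bset L m" and "b \<in> Bset L (m - l)"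
  shows "Mw L a b i j = Sw L a b i j"
proof -
  have bin: "binary_vec L a" "binary_vec L b" "binary_vec L i" "binary_vec L j"
    and sums: "sum_list a = l" "sum_list i = l"
    using assms(4-7) by (auto simp: Bset_def binary_vec_def)
  show ?thesis
  proof (cases "\<forall>k < L. a ! k + b ! k = j ! k")
    case True
    then have "admissible L a b i j"
      using bin by (simp add: admissible_def)
    then show ?thesis
      using Mw_eq_word_trace sums bin
      by (simp add: Sw_eq_word_trace sum_list_binary_vec)
  next
    case False
    then obtain k where k: "k < L" "a ! k + b ! k \<noteq> j ! k"
      by auto
    then have "word_trace (col_word L a b i j) = 0"
      by (simp add: word_trace_eq_0_nth vertex_op_def Sv_eq_0)
    then show ?thesis
      unfolding Mw_def if_not_P[OF False] by (simp add: Sw_eq_word_trace)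
  qed
qed

end
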